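(* Let $k>\ell\ge1$, $m\ge1$, $w=a^kba^\ell b^m$, and for $n\ge1$ let $S_n = a^kba^\ell a^{k}b a^{\ell}b^{m} (a^k b^{m+1}a^\ell)^n a^{k}b a^{\ell}b^{m} b^m$. For all integers $i,j\ge1$, $S_i\vdash^*_{\{w\}} S_j$ if and only if $i=j$.
   Context: For words $u,v$, the shuffle $u \sqcup\!\sqcup v$ is the set of all words $u_1v_1\cdots u_kv_k$ with $k\ge 1$, $u=u_1\cdots u_k$, $v=v_1\cdots v_k$ (pieces possibly empty). For a finite set $I$ of words, $v \vdash_I w$ means $w \in v \sqcup\!\sqcup u$ for some $u\in I$, and $\vdash_I^*$ is its reflexive-transitive closure. *)

theory Defs
  imports Main
begin

datatype letter = a | b

definition derives1 :: "'x list set \<Rightarrow> 'x list \<Rightarrow> 'x list \<Rightarrow> bool" where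
  "derives1 I v w \<longleftrightarrow> (\<exists>u\<in>I. w \<in> shuffles v u)"

definition derives :: "'x list set \<Rightarrow> 'x list \<Rightarrow> 'x list \<Rightarrow> bool" where
  "derives I = (derives1 I)\<^sup>*\<^sup>*"

definition wpow :: "'x list \<Rightarrow> nat \<Rightarrow> 'x list" where
  "wpow x n = concat (replicate n x)"

definition S :: "nat \<Rightarrow> nat \<Rightarrow> nat \<Rightarrow> nat \<Rightarrow> letter list" where
  "S k l m n =
     replicate k a @ [b] @ replicate l a @ replicate k a @ [b] @ replicate l a @ replicate m b
     @ wpow (replicate k a @ replicate (m+1) b @ replicate l a) n
     @ replicate k a @ [b] @ replicate l a @ replicate m b @ replicate m b"

end

theory Submission
  imports Defs
begin

text \<open>
  Weight a by m + 1 and b by -(k + l). Then w and the period a^(k+l) b^(m+1) have height 0, every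
  proper nonempty prefix of w has positive height, and S_n = head period^(n-1) tail, where head has
  height c = mk - l and its only prefixes of height at most c are head itself and those of length
  at most k + 1.

  Suppose S_j is a shuffle of S_i and copies of w, and read S_j block by block. Whenever the part of
  S_i consumed so far has height c, the heights force every copy of w to be untouched or used up;
  the next period of S_j must then come from S_i alone, since a fresh copy contributes at most one
  b and only after k letters a. So S_i is never cut just before a^(k+l) b a, and after each block
  the cut in S_i lies in its first a^k b or right after head period^q, where q counts the periods
  read. For j > i the second alternative runs out, so in the end at most k + 1 letters of S_i are
  consumed, which leaves more of S_i than the tail of S_j can hold. Lengths exclude j < i.
\<close>

inductive interleaving :: "nat \<Rightarrow> 'x list \<Rightarrow> (nat \<Rightarrow> 'x list) \<Rightarrow> bool" for L where
  interleaving_nil: "(\<And>r. r < L \<Longrightarrow> ws r = []) \<Longrightarrow> interleaving L [] ws"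
| interleaving_cons: "r < L \<Longrightarrow> ws r = x # v \<Longrightarrow> interleaving L u (ws(r := v)) \<Longrightarrow>
    interleaving L (x # u) ws"

lemma interleaving_sum_list:
  fixes f :: "'x \<Rightarrow> 'b::comm_monoid_add"
  assumes "interleaving L u ws"
  shows "(\<Sum>x\<leftarrow>u. f x) = (\<Sum>r<L. \<Sum>x\<leftarrow>ws r. f x)"
  using assms
proof (induction rule: interleaving.induct)
  case (interleaving_nil ws)
  then show ?case by simp
next
  case (interleaving_cons r ws x v u)
  let ?g = "\<lambda>xs. \<Sum>x\<leftarrow>xs. f x"
  have "(\<Sum>q<L. ?g (ws q)) = ?g (ws r) + (\<Sum>q\<in>{..<L} - {r}. ?g (ws q))"
    using interleaving_cons.hyps(1) by (simp add: sum.remove)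
  moreover have "(\<Sum>q<L. ?g ((ws(r := v)) q)) = ?g v + (\<Sum>q\<in>{..<L} - {r}. ?g (ws q))"
    using interleaving_cons.hyps(1) by (simp add: sum.remove)
  ultimately show ?case
    using interleaving_cons by (simp add: add.assoc)
qed

lemma interleaving_length:
  "interleaving L u ws \<Longrightarrow> length u = (\<Sum>r<L. length (ws r))"
  using interleaving_sum_list[of L u ws "\<lambda>_. 1::nat"] by (simp add: sum_list_triv)

lemma interleaving_append_split:
  assumes "interleaving L (u @ v) ws"
  obtains ns where "interleaving L u (\<lambda>r. take (ns r) (ws r))"
    and "interleaving L v (\<lambda>r. drop (ns r) (ws r))"
  using assms
proof (induction u arbitrary: ws thesis)
  case Nil
  show ?case
    by (rule Nil.prems(1)[of "\<lambda>_. 0"]) (use Nil.prems(2) in \<open>auto intro: interleaving_nil\<close>)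
next
  case (Cons x u)
  from Cons.prems(2) obtain r v' where r: "r < L" "ws r = x # v'"
    and rest: "interleaving L (u @ v) (ws(r := v'))"
    by (auto elim: interleaving.cases)
  obtain ns where ns: "interleaving L u (\<lambda>q. take (ns q) ((ws(r := v')) q))"
    "interleaving L v (\<lambda>q. drop (ns q) ((ws(r := v')) q))"
    using Cons.IH[OF _ rest] by blast
  let ?ns = "ns(r := Suc (ns r))"
  have "interleaving L (x # u) (\<lambda>q. take (?ns q) (ws q))"
  proof (rule interleaving_cons[OF r(1)])
    show "take (?ns r) (ws r) = x # take (ns r) v'" using r(2) by simp
    show "interleaving L u ((\<lambda>q. take (?ns q) (ws q))(r := take (ns r) v'))"
    proof -
      have "(\<lambda>q. take (?ns q) (ws q))(r := take (ns r) v') = (\<lambda>q. take (ns q) ((ws(r := v')) q))"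
        by (auto simp: fun_eq_iff)
      with ns(1) show ?thesis by simp
    qed
  qed
  moreover have "interleaving L v (\<lambda>q. drop (?ns q) (ws q))"
  proof -
    have "(\<lambda>q. drop (?ns q) (ws q)) = (\<lambda>q. drop (ns q) ((ws(r := v')) q))"
      using r(2) by (auto simp: fun_eq_iff)
    with ns(2) show ?thesis by simp
  qed
  ultimately show ?case by (rule Cons.prems(1))
qed

lemma interleaving_single: "ws 0 = u \<Longrightarrow> interleaving (Suc 0) u ws"
proof (induction u arbitrary: ws)
  case Nil
  then show ?case by (intro interleaving_nil) simp
next
  case (Cons x u)
  then show ?case by (intro interleaving_cons[of 0 _ _ x u]) auto
qed

lemma interleaving_add_shuffle:
  "u \<in> shuffles v z \<Longrightarrow> interleaving L v ws \<Longrightarrow> interleaving (Suc L) u (ws(L := z))"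
proof (induction u arbitrary: v z ws)
  case Nil
  then have "v = []" "z = []" by auto
  have "ws r = []" if "r < L" for r
    using Nil.prems(2) \<open>v = []\<close> that by (auto elim: interleaving.cases)
  with \<open>z = []\<close> show ?case
    by (intro interleaving_nil) (auto simp: less_Suc_eq)
next
  case (Cons x u)
  from Cons.prems(1) consider (left) v' where "v = x # v'" "u \<in> shuffles v' z"
    | (right) z' where "z = x # z'" "u \<in> shuffles v z'"
    by (auto simp: Cons_in_shuffles_iff neq_Nil_conv)
  then show ?case
  proof cases
    case left
    from Cons.prems(2) left(1) obtain r v'' where r: "r < L" "ws r = x # v''"
      and rest: "interleaving L v' (ws(r := v''))"
      by (auto elim: interleaving.cases)
    have swap: "(ws(L := z))(r := v'') = (ws(r := v''))(L := z)"
      using r(1) by (auto simp: fun_eq_iff)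
    show ?thesis
    proof (rule interleaving_cons[of r])
      show "r < Suc L" "(ws(L := z)) r = x # v''" using r by auto
      show "interleaving (Suc L) u ((ws(L := z))(r := v''))"
        unfolding swap by (rule Cons.IH[OF left(2) rest])
    qed
  next
    case right
    show ?thesis
    proof (rule interleaving_cons[of L])
      show "L < Suc L" "(ws(L := z)) L = x # z'" using right(1) by auto
      show "interleaving (Suc L) u ((ws(L := z))(L := z'))"
        unfolding fun_upd_upd by (rule Cons.IH[OF right(2) Cons.prems(2)])
    qed
  qed
qed

lemma derives_imp_interleaving:
  assumes "derives {w} v u"
  obtains t where "interleaving (Suc t) u (\<lambda>r. if r = 0 then v else w)"
proof -
  have "\<exists>t. interleaving (Suc t) u (\<lambda>r. if r = 0 then v else w)"
    using assms unfolding derives_def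
  proof (induction rule: rtranclp_induct)
    case base
    show ?case by (intro exI[of _ 0] interleaving_single) simp
  next
    case (step y z)
    then obtain t where "interleaving (Suc t) y (\<lambda>r. if r = 0 then v else w)" by blast
    moreover have "z \<in> shuffles y w" using step(2) by (simp add: derives1_def)
    ultimately have "interleaving (Suc (Suc t)) z ((\<lambda>r. if r = 0 then v else w)(Suc t := w))"
      by (intro interleaving_add_shuffle)
    moreover have "(\<lambda>r. if r = 0 then v else w)(Suc t := w) = (\<lambda>r. if r = 0 then v else w)"
      by auto
    ultimately show ?case by auto
  qed
  with that show ?thesis by blast
qed

lemma interleaving_replicate:
  "interleaving L (replicate n x) ws \<Longrightarrow> r < L \<Longrightarrow> ws r = replicate (length (ws r)) x"
proof (induction n arbitrary: ws r)
  case 0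
  then show ?case by (auto elim: interleaving.cases)
next
  case (Suc n)
  from Suc.prems(1) obtain q v where q: "q < L" "ws q = x # v"
    and rest: "interleaving L (replicate n x) (ws(q := v))"
    by (auto elim: interleaving.cases)
  from Suc.IH[OF rest Suc.prems(2)] Suc.IH[OF rest q(1)] q(2) show ?case
    by (cases "r = q") auto
qed

lemma interleaving_blocks_split:
  assumes "interleaving L (replicate p x @ replicate q x' @ u) ws"
  obtains y e where "\<And>r. r < L \<Longrightarrow> ws r = replicate (y r) x @ replicate (e r) x' @ drop (y r + e r) (ws r)"
    and "interleaving L u (\<lambda>r. drop (y r + e r) (ws r))"
    and "(\<Sum>r<L. y r) = p" and "(\<Sum>r<L. e r) = q"
proof -
  obtain ns where blocks: "interleaving L (replicate p x @ replicate q x') (\<lambda>r. take (ns r) (ws r))"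
    and rest: "interleaving L u (\<lambda>r. drop (ns r) (ws r))"
    using interleaving_append_split[of L "replicate p x @ replicate q x'" u ws] assms by auto
  obtain ny where first: "interleaving L (replicate p x) (\<lambda>r. take (ny r) (take (ns r) (ws r)))"
    and second: "interleaving L (replicate q x') (\<lambda>r. drop (ny r) (take (ns r) (ws r)))"
    using interleaving_append_split[OF blocks] by blast
  define y where "y r = length (take (ny r) (take (ns r) (ws r)))" for r
  define e where "e r = length (drop (ny r) (take (ns r) (ws r)))" for r
  have take_ns: "take (ns r) (ws r) = replicate (y r) x @ replicate (e r) x'" if "r < L" for r
    using interleaving_replicate[OF first that] interleaving_replicate[OF second that]
    unfolding y_def e_def by (metis append_take_drop_id)
  have drop_ns: "drop (y r + e r) (ws r) = drop (ns r) (ws r)" for r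
    unfolding y_def e_def by (simp add: min_def)
  show ?thesis
  proof
    show "ws r = replicate (y r) x @ replicate (e r) x' @ drop (y r + e r) (ws r)" if "r < L" for r
      using take_ns[OF that] drop_ns[of r] by (metis append.assoc append_take_drop_id)
    show "interleaving L u (\<lambda>r. drop (y r + e r) (ws r))"
      using rest drop_ns by simp
    show "(\<Sum>r<L. y r) = p"
      using interleaving_length[OF first] by (simp add: y_def)
    show "(\<Sum>r<L. e r) = q"
      using interleaving_length[OF second] by (simp add: e_def)
  qed
qed

lemma replicate_blocks_prefix:
  assumes "x \<noteq> x'" and "replicate y x @ replicate e x' @ s = replicate y0 x @ x' # z"
  shows "y \<le> y0" and "0 < e \<Longrightarrow> y = y0"
proof -
  have "y \<le> y0 \<and> (0 < e \<longrightarrow> y = y0)"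
    using assms(2)
  proof (induction y0 arbitrary: y)
    case 0
    with assms(1) show ?case by (cases y) auto
  next
    case (Suc y0)
    with assms(1) show ?case by (cases y; cases e) auto
  qed
  then show "y \<le> y0" and "0 < e \<Longrightarrow> y = y0" by auto
qed

lemma replicate_blocks_prefix_le_one:
  assumes "x \<noteq> x'" and "replicate y x @ replicate e x' @ s = replicate y0 x @ x' # x # z"
  shows "e \<le> 1"
proof (rule ccontr)
  assume "\<not> e \<le> 1"
  then obtain e' where e: "e = Suc (Suc e')" using less_imp_Suc_add[of 1 e] by auto
  moreover have "y = y0" using replicate_blocks_prefix(2)[OF assms] e by simp
  ultimately show False using assms by simp
qed

lemma length_concat_replicate [simp]: "length (concat (replicate n u)) = n * length u"
  by (induction n) simp_all

lemma concat_replicate_rotate: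
  "concat (replicate (Suc n) (u @ v)) = u @ concat (replicate n (v @ u)) @ v"
  by (induction n) simp_all

locale akbalbm =
  fixes k l m :: nat
  assumes l_less_k: "l < k" and l_pos: "1 \<le> l" and m_pos: "1 \<le> m"
begin

lemma l_less_k_mult_m: "l < k * m"
  using l_less_k m_pos by (simp add: less_le_trans)

definition w :: "letter list" where
  "w = replicate k a @ [b] @ replicate l a @ replicate m b"

definition period :: "letter list" where
  "period = replicate (k + l) a @ replicate (Suc m) b"

definition head :: "letter list" where
  "head = replicate k a @ b # replicate l a @ w @ replicate k a @ replicate (Suc m) b"

definition tail :: "letter list" where
  "tail = replicate l a @ w @ replicate m b"

lemma S_eq_head_periods_tail:
  assumes "1 \<le> n"
  shows "S k l m n = head @ concat (replicate (n - 1) period) @ tail"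
proof -
  obtain n' where n: "n = Suc n'" using assms by (cases n) auto
  have "period = replicate l a @ replicate k a @ replicate (Suc m) b"
    by (simp add: period_def replicate_add[symmetric] add.commute)
  then show ?thesis
    using concat_replicate_rotate[of n' "replicate k a @ replicate (Suc m) b" "replicate l a"]
    by (simp add: S_def wpow_def n head_def tail_def w_def)
qed

lemma w_eq_Cons: "w = replicate k a @ b # a # replicate (l - 1) a @ replicate m b"
  unfolding w_def using l_pos by (cases l) simp_all

lemma head_eq_Cons:
  "head = replicate k a @ b # replicate (k + l) a @ b # a # replicate (l - 1) a @ replicate m b
     @ replicate k a @ replicate (Suc m) b"
  by (simp add: head_def w_eq_Cons replicate_add[symmetric] add.commute del: replicate_Suc)

lemma tail_eq_Cons: "tail = replicate (k + l) a @ b # a # replicate (l - 1) a @ replicate m b @ replicate m b"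
  unfolding tail_def w_def using l_pos
  by (cases l) (simp_all add: replicate_add[symmetric] add.commute)

definition height :: "letter list \<Rightarrow> int" where
  "height u = (\<Sum>x\<leftarrow>u. case x of a \<Rightarrow> int (Suc m) | b \<Rightarrow> - int (k + l))"

lemma height_Nil [simp]: "height [] = 0"
  and height_Cons_a [simp]: "height (a # u) = int (Suc m) + height u"
  and height_Cons_b [simp]: "height (b # u) = height u - int (k + l)"
  and height_append [simp]: "height (u @ v) = height u + height v"
  and height_replicate_a [simp]: "height (replicate n a) = int n * int (Suc m)"
  and height_replicate_b [simp]: "height (replicate n b) = - (int n * int (k + l))"
  by (simp_all add: height_def sum_list_replicate algebra_simps)

lemma interleaving_height: "interleaving L u ws \<Longrightarrow> height u = (\<Sum>r<L. height (ws r))"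
  unfolding height_def by (rule interleaving_sum_list)

definition head_height :: int where
  "head_height = int m * int k - int l"

lemma height_w: "height w = 0"
  and height_period: "height period = 0"
  and height_head: "height head = head_height"
  and height_tail: "height tail = - head_height"
  by (simp_all add: w_def period_def head_def tail_def head_height_def algebra_simps)

lemma height_concat_periods: "height (concat (replicate n period)) = 0"
  by (induction n) (simp_all add: height_period)

lemma height_S: "1 \<le> n \<Longrightarrow> height (S k l m n) = 0"
  by (simp add: S_eq_head_periods_tail height_head height_tail height_concat_periods)

lemma height_take_w_pos:
  assumes "0 < n" and "n < length w"
  shows "0 < height (take n w)"
proof -
  consider "n \<le> k" | y where "n = Suc k + y" "y \<le> l" | z where "n = Suc k + l + z" "z < m"
    using assms(2) by (cases "n \<le> k"; cases "n \<le> Suc k + l")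
      (auto simp: w_def intro: that(1) that(2)[of "n - Suc k"] that(3)[of "n - Suc k - l"])
  then show ?thesis
  proof cases
    case 1
    then show ?thesis using assms(1) by (simp add: w_def)
  next
    case (2 y)
    then have "height (take n w) = int k * int m - int l + int y * int (Suc m)"
      by (simp add: w_def algebra_simps)
    moreover have "int l < int k * int m" using l_less_k_mult_m by (simp flip: of_nat_mult)
    ultimately show ?thesis by (simp add: add_pos_nonneg)
  next
    case (3 z)
    then have "height (take n w) = int (m - z) * int (k + l)"
      by (simp add: w_def algebra_simps of_nat_diff)
    then show ?thesis using 3(2) l_pos by simp
  qed
qed

lemma height_take_w_nonneg: "0 \<le> height (take n w)"
proof -
  consider "n = 0" | "length w \<le> n" | "0 < n" "n < length w" by linarith
  then show ?thesis
  proof cases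
    case 3
    then show ?thesis using height_take_w_pos[of n] by simp
  qed (simp_all add: height_w)
qed

lemma height_take_w_eq_0:
  assumes "height (take n w) = 0"
  shows "drop n w = w \<or> drop n w = []"
  using height_take_w_pos[of n] assms by (cases "n = 0") auto

lemma height_take_head:
  assumes "n \<le> length head" and "height (take n head) \<le> head_height"
  shows "n \<le> Suc k \<or> n = length head"
proof (rule ccontr)
  assume "\<not> (n \<le> Suc k \<or> n = length head)"
  then have "Suc k < n" "n < length head" using assms(1) by auto
  then consider y where "n = Suc k + y" "1 \<le> y" "y \<le> l"
    | y where "n = Suc k + l + y" "y \<le> length w"
    | y where "n = Suc k + l + length w + y" "y \<le> k"
    | z where "n = Suc k + l + length w + k + z" "z \<le> m"
    by (cases "n \<le> Suc k + l"; cases "n \<le> Suc k + l + length w"; cases "n \<le> Suc k + l + length w + k")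
      (auto simp: head_def intro: that(1)[of "n - Suc k"] that(2)[of "n - Suc k - l"]
        that(3)[of "n - Suc k - l - length w"] that(4)[of "n - Suc k - l - length w - k"])
  then have "head_height < height (take n head)"
  proof cases
    case (1 y)
    then have "height (take n head) = head_height + int y * int (Suc m)"
      by (simp add: head_def head_height_def algebra_simps)
    then show ?thesis using 1(2) by simp
  next
    case (2 y)
    then have "height (take n head) = head_height + int l * int (Suc m) + height (take y w)"
      by (simp add: head_def head_height_def algebra_simps)
    moreover have "0 < int l * int (Suc m)" using l_pos by simp
    ultimately show ?thesis using height_take_w_nonneg[of y] by linarith
  next
    case (3 y)
    then have "height (take n head) = head_height + int (l + y) * int (Suc m)"
      by (simp add: head_def head_height_def height_w algebra_simps)
    then show ?thesis using l_pos by simp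
  next
    case (4 z)
    then have "height (take n head) = head_height + int (Suc m - z) * int (k + l)"
      by (simp add: head_def head_height_def height_w algebra_simps of_nat_diff del: replicate_Suc)
    then show ?thesis using 4(2) l_pos by simp
  qed
  with assms(2) show False by simp
qed

lemma period_taken_from_first:
  assumes copies: "\<And>q. q < t \<Longrightarrow> R (Suc q) = w \<or> R (Suc q) = []"
    and first: "R 0 = replicate (k + l) a @ b # z"
    and blocks: "\<And>r. r < Suc t \<Longrightarrow> R r = replicate (y r) a @ replicate (e r) b @ s r"
    and sum_y: "(\<Sum>r<Suc t. y r) = k + l" and sum_e: "(\<Sum>r<Suc t. e r) = Suc m"
  shows "y 0 = k + l \<and> e 0 = Suc m"
proof -
  \<comment> \<open>a fresh copy supplies at most one b, and only after its k letters a\<close>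
  have copy_bound: "k * e (Suc q) \<le> y (Suc q)" if "q < t" for q
  proof (cases "R (Suc q) = []")
    case True
    then show ?thesis using blocks[of "Suc q"] that by simp
  next
    case False
    then have "R (Suc q) = w" using copies[OF that] by blast
    then have "replicate (y (Suc q)) a @ replicate (e (Suc q)) b @ s (Suc q) = w"
      using blocks[of "Suc q"] that by simp
    note copy = this[unfolded w_eq_Cons]
    from replicate_blocks_prefix[OF _ copy] replicate_blocks_prefix_le_one[OF _ copy]
    show ?thesis by (cases "e (Suc q)") auto
  qed
  have "replicate (y 0) a @ replicate (e 0) b @ s 0 = replicate (k + l) a @ b # z"
    using blocks[of 0] first by auto
  from replicate_blocks_prefix[OF _ this]
  have first_bound: "y 0 \<le> k + l" "0 < e 0 \<Longrightarrow> y 0 = k + l" by simp_all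
  have sum_y': "y 0 + (\<Sum>q<t. y (Suc q)) = k + l" and sum_e': "e 0 + (\<Sum>q<t. e (Suc q)) = Suc m"
    using sum_y sum_e by (simp_all only: sum.lessThan_Suc_shift)
  have copies_bound: "k * (\<Sum>q<t. e (Suc q)) \<le> (\<Sum>q<t. y (Suc q))"
    unfolding sum_distrib_left using copy_bound by (intro sum_mono) auto
  have "0 < e 0"
  proof (rule ccontr)
    assume "\<not> 0 < e 0"
    then have "k * Suc m \<le> k + l" using sum_e' sum_y' copies_bound by simp
    then show False using l_less_k_mult_m by simp
  qed
  then have "y 0 = k + l" using first_bound by simp
  then have "k * (\<Sum>q<t. e (Suc q)) = 0" using sum_y' copies_bound by simp
  then have "(\<Sum>q<t. e (Suc q)) = 0" using l_less_k by simp
  with \<open>y 0 = k + l\<close> sum_e' show ?thesis by simp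
qed

lemma S_cut_cases:
  assumes "1 \<le> n" and "c \<le> Suc k \<or> q < n \<and> c = length head + q * length period"
  obtains (first_block) z where "c \<le> k" "drop c (S k l m n) = replicate (k - c) a @ b # a # z"
    | (blocked) z where "height (take c (S k l m n)) = head_height"
        "drop c (S k l m n) = replicate (k + l) a @ b # a # z"
    | (period) z where "Suc q < n" "c = length head + q * length period"
        "height (take c (S k l m n)) = head_height" "drop c (S k l m n) = period @ z"
proof -
  obtain z where S: "S k l m n = replicate k a @ b # replicate (k + l) a @ b # a # z"
    using S_eq_head_periods_tail[OF assms(1)] head_eq_Cons by auto
  have periods: "S k l m n = (head @ concat (replicate q period)) @ concat (replicate (n - Suc q) period) @ tail"
    if "q < n"
    using S_eq_head_periods_tail[OF assms(1)] that replicate_add[of q "n - Suc q" period]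
    by (simp add: Suc_diff_Suc)
  have height_periods: "height (head @ concat (replicate q period)) = head_height"
    by (simp add: height_head height_concat_periods)
  consider "c \<le> k" | "c = Suc k" | "Suc q = n" "c = length head + q * length period"
    | "Suc q < n" "c = length head + q * length period"
    using assms(2) by linarith
  then show ?thesis
  proof cases
    case 1
    obtain K where "k + l = Suc K" using l_pos by (cases "k + l") auto
    then show ?thesis using 1 S by (intro first_block) auto
  next
    case 2
    have "height (replicate k a @ [b]) = head_height" by (simp add: head_height_def algebra_simps)
    then show ?thesis using 2 S by (intro blocked) auto
  next
    case 3
    then have "S k l m n = (head @ concat (replicate q period)) @ tail" using periods by simp
    then show ?thesis using 3 height_periods tail_eq_Cons by (intro blocked) simp_all
  next
    case 4
    then have "n - Suc q = Suc (n - Suc (Suc q))" by simp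
    with periods 4(1) have "S k l m n = (head @ concat (replicate q period)) @ period
        @ concat (replicate (n - Suc (Suc q)) period) @ tail"
      by simp
    then show ?thesis using 4 height_periods by (intro period) simp_all
  qed
qed

end


locale akbalbm_interleaving = akbalbm +
  fixes i t :: nat
  assumes i_pos: "1 \<le> i"
begin

definition component :: "nat \<Rightarrow> letter list" where
  "component = (\<lambda>r. if r = 0 then S k l m i else w)"

lemma sum_components:
  "(\<Sum>r<Suc t. f r (component r)) = f 0 (S k l m i) + (\<Sum>q<t. f (Suc q) w)"
  by (simp only: sum.lessThan_Suc_shift) (simp add: component_def)

lemma prefix_heights_sum:
  assumes "interleaving (Suc t) (concat (replicate p period) @ tail) (\<lambda>r. drop (ns r) (component r))"
  shows "(\<Sum>r<Suc t. height (take (ns r) (component r))) = head_height"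
proof -
  have "height (component r) = 0" for r
    by (simp add: component_def height_S[OF i_pos] height_w)
  then have "height (take (ns r) (component r)) = - height (drop (ns r) (component r))" for r
    using height_append[of "take (ns r) (component r)" "drop (ns r) (component r)"] by simp
  moreover have "(\<Sum>r<Suc t. height (drop (ns r) (component r))) = - head_height"
    using interleaving_height[OF assms] height_concat_periods height_tail by simp
  ultimately show ?thesis by (simp add: sum_negf)
qed

lemma copies_untouched_or_used_up:
  assumes "interleaving (Suc t) (concat (replicate p period) @ tail) (\<lambda>r. drop (ns r) (component r))"
    and "height (take (ns 0) (S k l m i)) = head_height" and "q < t"
  shows "drop (ns (Suc q)) w = w \<or> drop (ns (Suc q)) w = []"
proof -
  have "(\<Sum>q<t. height (take (ns (Suc q)) w)) = 0"
    using prefix_heights_sum[OF assms(1)] assms(2)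
      sum_components[of "\<lambda>r u. height (take (ns r) u)"] by simp
  then have "height (take (ns (Suc q)) w) = 0"
    using height_take_w_nonneg assms(3) by (simp add: sum_nonneg_eq_0_iff)
  then show ?thesis by (rule height_take_w_eq_0)
qed

lemma length_S_le_interleaving:
  "interleaving (Suc t) u component \<Longrightarrow> length (S k l m i) \<le> length u"
  using interleaving_length[of "Suc t" u component] sum_components[of "\<lambda>_. length"] by simp

text \<open>
  In \<open>cut_state p q ns\<close>, q periods of S_j have been read, period^p tail is still to come, and
  ns r letters of component r have been consumed.
\<close>

definition cut_state :: "nat \<Rightarrow> nat \<Rightarrow> (nat \<Rightarrow> nat) \<Rightarrow> bool" where
  "cut_state p q ns \<longleftrightarrow>
     interleaving (Suc t) (concat (replicate p period) @ tail) (\<lambda>r. drop (ns r) (component r)) \<and>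
     (ns 0 \<le> Suc k \<or> q < i \<and> ns 0 = length head + q * length period)"

lemma cut_state_step:
  assumes "cut_state (Suc p) q ns"
  obtains ns' where "cut_state p (Suc q) ns'"
proof -
  let ?R = "\<lambda>r. drop (ns r) (component r)"
  have remaining: "interleaving (Suc t) (concat (replicate (Suc p) period) @ tail) ?R"
    and cut: "ns 0 \<le> Suc k \<or> q < i \<and> ns 0 = length head + q * length period"
    using assms by (simp_all add: cut_state_def)
  have "interleaving (Suc t) (replicate (k + l) a @ replicate (Suc m) b @ concat (replicate p period) @ tail) ?R"
    using remaining by (simp add: period_def)
  then obtain y e where blocks: "\<And>r. r < Suc t \<Longrightarrow>
      ?R r = replicate (y r) a @ replicate (e r) b @ drop (y r + e r) (?R r)"
    and rest: "interleaving (Suc t) (concat (replicate p period) @ tail) (\<lambda>r. drop (y r + e r) (?R r))"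
    and sum_y: "(\<Sum>r<Suc t. y r) = k + l" and sum_e: "(\<Sum>r<Suc t. e r) = Suc m"
    by (rule interleaving_blocks_split) blast
  define ns' where "ns' r = y r + e r + ns r" for r
  have rest': "interleaving (Suc t) (concat (replicate p period) @ tail) (\<lambda>r. drop (ns' r) (component r))"
    using rest by (simp add: ns'_def)
  have first: "replicate (y 0) a @ replicate (e 0) b @ drop (y 0 + e 0) (?R 0) = drop (ns 0) (S k l m i)"
    using blocks[of 0] by (simp add: component_def)
  have balanced: "y 0 = k + l \<and> e 0 = Suc m"
    if "height (take (ns 0) (S k l m i)) = head_height"
      and "drop (ns 0) (S k l m i) = replicate (k + l) a @ b # z" for z
    using period_taken_from_first[OF _ _ blocks sum_y sum_e, of z]
      copies_untouched_or_used_up[OF remaining that(1)] that(2)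
    by (simp add: component_def)
  have "ns' 0 \<le> Suc k \<or> Suc q < i \<and> ns' 0 = length head + Suc q * length period"
    using i_pos cut
  proof (cases rule: S_cut_cases)
    case (first_block z)
    from replicate_blocks_prefix(1)[OF _ first[unfolded first_block(2)]]
      replicate_blocks_prefix_le_one[OF _ first[unfolded first_block(2)]]
    have "ns' 0 \<le> Suc k" using first_block(1) by (simp add: ns'_def)
    then show ?thesis ..
  next
    case (blocked z)
    have "e 0 = Suc m" using balanced[of "a # z"] blocked by simp
    moreover have "e 0 \<le> 1"
      using replicate_blocks_prefix_le_one[OF _ first[unfolded blocked(2)]] by simp
    ultimately show ?thesis using m_pos by simp
  next
    case (period z)
    then have "y 0 = k + l \<and> e 0 = Suc m" using balanced by (simp add: period_def)
    then show ?thesis using period by (simp add: ns'_def period_def)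
  qed
  then show ?thesis using rest' that unfolding cut_state_def by blast
qed

lemma cut_state_iterate: "cut_state (p + d) q ns \<Longrightarrow> \<exists>ns'. cut_state p (q + d) ns'"
proof (induction d arbitrary: q ns)
  case 0
  then show ?case by auto
next
  case (Suc d)
  obtain ns' where "cut_state (p + d) (Suc q) ns'"
    using cut_state_step[of "p + d" q ns] Suc.prems by auto
  then show ?case using Suc.IH by fastforce
qed

lemma cut_state_initial:
  assumes "interleaving (Suc t) (S k l m j) component" and "1 \<le> j"
  obtains ns where "cut_state (j - 1) 0 ns"
proof -
  obtain ns where head_part: "interleaving (Suc t) head (\<lambda>r. take (ns r) (component r))"
    and remaining: "interleaving (Suc t) (concat (replicate (j - 1) period) @ tail) (\<lambda>r. drop (ns r) (component r))"
    using interleaving_append_split[of "Suc t" head] assms S_eq_head_periods_tail[of j] by auto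
  have height_le: "height (take (ns 0) (S k l m i)) \<le> head_height"
    using prefix_heights_sum[OF remaining] sum_components[of "\<lambda>r u. height (take (ns r) u)"]
      height_take_w_nonneg
    by (simp add: sum_nonneg)
  have "length (take (ns 0) (S k l m i)) \<le> length head"
    using interleaving_length[OF head_part] sum_components[of "\<lambda>r u. length (take (ns r) u)"]
    by simp
  moreover have "length head < length (S k l m i)"
    using S_eq_head_periods_tail[OF i_pos] tail_eq_Cons by simp
  ultimately have within_head: "ns 0 \<le> length head" by simp
  then have "take (ns 0) (S k l m i) = take (ns 0) head"
    using S_eq_head_periods_tail[OF i_pos] by simp
  then have "ns 0 \<le> Suc k \<or> ns 0 = length head"
    using height_take_head[OF within_head] height_le by simp
  then show ?thesis
    using remaining i_pos by (intro that[of ns]) (auto simp: cut_state_def)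
qed

lemma cut_state_final:
  assumes "cut_state 0 q ns" and "i \<le> q"
  shows False
proof -
  have remaining: "interleaving (Suc t) tail (\<lambda>r. drop (ns r) (component r))"
    and "ns 0 \<le> Suc k"
    using assms by (auto simp: cut_state_def)
  have "length (drop (ns 0) (S k l m i)) \<le> length tail"
    using interleaving_length[OF remaining] sum_components[of "\<lambda>r u. length (drop (ns r) u)"]
    by simp
  moreover have "Suc k < length head" by (simp add: head_def)
  ultimately show False
    using \<open>ns 0 \<le> Suc k\<close> S_eq_head_periods_tail[OF i_pos] by simp
qed

lemma no_interleaving_of_longer_S:
  assumes "interleaving (Suc t) (S k l m j) component" and "i < j"
  shows False
proof -
  obtain ns where "cut_state (j - 1) 0 ns"
    using cut_state_initial assms by (metis less_imp_le_nat i_pos le_trans)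
  then obtain ns' where "cut_state 0 (j - 1) ns'"
    using cut_state_iterate[of 0 "j - 1" 0 ns] by auto
  then show False
    by (rule cut_state_final) (use assms(2) in linarith)
qed

end

lemma length_S_mono:
  assumes "length (S k l m i) \<le> length (S k l m j)"
  shows "i \<le> j"
proof -
  have "i * Suc (k + m + l) \<le> j * Suc (k + m + l)"
    using assms by (simp add: S_def wpow_def algebra_simps)
  then show ?thesis by (metis mult_le_cancel2 zero_less_Suc)
qed

theorem lemma7:
  fixes k l m i j :: nat
  assumes "k > l" and "l \<ge> 1" and "m \<ge> 1" and "i \<ge> 1" and "j \<ge> 1"
  shows "derives {replicate k a @ [b] @ replicate l a @ replicate m b} (S k l m i) (S k l m j)
           \<longleftrightarrow> i = j"
proof
  assume "derives {replicate k a @ [b] @ replicate l a @ replicate m b} (S k l m i) (S k l m j)"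
  then obtain t where derivation: "interleaving (Suc t) (S k l m j)
      (\<lambda>r. if r = 0 then S k l m i else replicate k a @ [b] @ replicate l a @ replicate m b)"
    by (rule derives_imp_interleaving)
  interpret akbalbm_interleaving k l m i t
    using assms by unfold_locales simp_all
  have interleaving: "interleaving (Suc t) (S k l m j) component"
    using derivation unfolding component_def w_def .
  have "i \<le> j"
    using length_S_le_interleaving[OF interleaving] by (rule length_S_mono)
  moreover have "\<not> i < j"
    using no_interleaving_of_longer_S[OF interleaving] by blast
  ultimately show "i = j" by simp
next
  assume "i = j"
  then show "derives {replicate k a @ [b] @ replicate l a @ replicate m b} (S k l m i) (S k l m j)"
    by (simp add: derives_def)
qed

end
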